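(* Let $\mathcal{R}$ be a field and $(\mathcal{C}^{\bullet},\partial)$ a bigraded cochain complex of $\mathcal{R}$-vector spaces as in the context. Then there are vector space isomorphisms \[ B^{2}(\mathcal{C},\partial)\cong(B^{2}(\mathcal{C},\partial)\cap\mathcal{C}^{2,0})\oplus(\mathcal{B}^{2}_{1}\cap\mathcal{C}^{1,1})\oplus B^{2}(\mathcal{C}^{0,\bullet},\partial_{0,1}), \] \[ Z^{2}(\mathcal{C},\partial)\cong Z^{2}(\mathcal{N}_{0},\overline{\partial})\oplus\ker(\varrho_{2})\oplus\mathcal{Z}^{2}_{2}, \] \[ H^{2}(\mathcal{C},\partial)\cong\frac{Z^{2}(\mathcal{N}_{0},\overline{\partial})}{B^{2}(\mathcal{C},\partial)\cap\mathcal{C}^{2,0}}\oplus\frac{\ker(\varrho_{2})}{\mathcal{B}^{2}_{1}\cap\mathcal{C}^{1,1}}\oplus\frac{\mathcal{Z}^{2}_{2}}{B^{2}(\mathcal{C}^{0,\bullet},\partial_{0,1})}. \]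
   Context: Setting: $\mathcal{C}^{k}=\bigoplus_{p+q=k}\mathcal{C}^{p,q}$ with $\mathcal{C}^{p,q}=\{0\}$ if $p<0$ or $q<0$; $\partial$ is linear of degree $1$, $\partial^{2}=0$, $\partial=\partial_{2,-1}+\partial_{1,0}+\partial_{0,1}$ with $\partial_{i,j}(\mathcal{C}^{p,q})\subseteq\mathcal{C}^{p+i,q+j}$. For $\eta\in\mathcal{C}^k$, $\eta_{p,q}$ is its $\mathcal{C}^{p,q}$-component. $G^{q}\mathcal{C}:=\bigoplus_{j\geq q}\mathcal{C}^{i,j}$, $\pi_{q}:\mathcal{C}\to G^{q}\mathcal{C}$ the projection along the bigrading. $(\mathcal{C}^{0,\bullet},\partial_{0,1})$ is a cochain complex. $\mathcal{N}^{p,q}:=\ker(\partial_{0,1}|_{\mathcal{C}^{p,q}})\cap\ker(\partial_{2,-1}|_{\mathcal{C}^{p,q}})$, $\mathcal{N}_{q}:=\bigoplus_{p}\mathcal{N}^{p-q,q}$ (degree-$m$ part $\mathcal{N}^{m-q,q}$), a subcomplex with differential $\overline{\partial}:=\partial|_{\mathcal{N}_q}$. $\mathcal{M}^{k}:=\{\eta\in\mathcal{C}^{k}\mid(\partial\eta)_{i,j}\in B^{k+1}(\mathcal{N}_{j},\overline{\partial})\ \forall\, i+j=k+1\}$; $\mathcal{Z}^{k}_{q}:=\{\pi_{q}(\eta)\mid\eta\in\mathcal{M}^{k},\ \pi_{q}(\partial\eta)=0\}$; $\mathcal{B}^{k}_{q}:=\pi_{q}(B^{k}(\mathcal{C},\partial))$.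 $\mathcal{A}^{k}:=\{\pi_{1}(\eta)\mid\eta\in\mathcal{C}^{k},\ \pi_{1}(\partial\eta)=0\}$, $\mathcal{J}^{k}:=\mathcal{A}^{k}\cap\mathcal{C}^{k-1,1}$. For $\xi\in\mathcal{A}^{k}$ and any $\eta$ with $\pi_{1}\eta=\xi$, $\pi_{1}(\partial\eta)=0$, the class $[\partial_{2,-1}\xi_{k-1,1}+\partial_{1,0}\eta_{k,0}]\in H^{k+1}(\mathcal{N}_{0},\overline\partial)$ depends only on $\xi$, defining the linear map $\rho_{k}:\mathcal{A}^{k}\to H^{k+1}(\mathcal{N}_{0},\overline{\partial})$; $\varrho_{k}:=\rho_{k}|_{\mathcal{J}^{k}}$. *)

theory Defs
  imports Main "HOL.Vector_Spaces"
begin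

text \<open>The ambient type 'v is a vector space over the field 'f via the
scalar multiplication s.  The bigraded pieces are subspaces C p q of 'v
(indices p, q :: int), forming an (internal) direct sum.  The three
components of the differential are maps d21, d10, d01 on 'v.\<close>

definition tot :: "('v \<Rightarrow> 'v::ab_group_add) \<Rightarrow> ('v \<Rightarrow> 'v) \<Rightarrow> ('v \<Rightarrow> 'v) \<Rightarrow> 'v \<Rightarrow> 'v" where
  "tot d21 d10 d01 x = d21 x + d10 x + d01 x"

definition indep_family :: "(int \<Rightarrow> int \<Rightarrow> 'v::ab_group_add set) \<Rightarrow> bool" where
  "indep_family C \<longleftrightarrow>
     (\<forall>S x. finite S \<longrightarrow> (\<forall>(p,q)\<in>S. x (p,q) \<in> C p q) \<longrightarrow> sum x S = 0
        \<longrightarrow> (\<forall>i\<in>S. x i = 0))"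

definition Ck :: "('f::field \<Rightarrow> 'v \<Rightarrow> 'v::ab_group_add) \<Rightarrow> (int \<Rightarrow> int \<Rightarrow> 'v set) \<Rightarrow> int \<Rightarrow> 'v set" where
  "Ck s C k = module.span s (\<Union>{C p q | p q. p + q = k})"

definition comp :: "('f::field \<Rightarrow> 'v \<Rightarrow> 'v::ab_group_add) \<Rightarrow> (int \<Rightarrow> int \<Rightarrow> 'v set) \<Rightarrow> int \<Rightarrow> int \<Rightarrow> 'v \<Rightarrow> 'v" where
  "comp s C p q \<eta> = (THE x. x \<in> C p q \<and>
      \<eta> - x \<in> module.span s (\<Union>{C a b | a b. (a, b) \<noteq> (p, q)}))"

definition proj :: "('f::field \<Rightarrow> 'v \<Rightarrow> 'v::ab_group_add) \<Rightarrow> (int \<Rightarrow> int \<Rightarrow> 'v set) \<Rightarrow> int \<Rightarrow> 'v \<Rightarrow> 'v" where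
  "proj s C q \<eta> = (THE y. y \<in> module.span s (\<Union>{C i j | i j. q \<le> j}) \<and>
      \<eta> - y \<in> module.span s (\<Union>{C i j | i j. j < q}))"

definition Nsp :: "(int \<Rightarrow> int \<Rightarrow> 'v::ab_group_add set) \<Rightarrow> ('v \<Rightarrow> 'v) \<Rightarrow> ('v \<Rightarrow> 'v) \<Rightarrow> int \<Rightarrow> int \<Rightarrow> 'v set" where
  "Nsp C d21 d01 p q = {x \<in> C p q. d01 x = 0 \<and> d21 x = 0}"

text \<open>B^{m}(N_q, dbar) = dbar(N_q in degree m-1) = dd(N^{m-1-q,q}).\<close>
definition BN :: "(int \<Rightarrow> int \<Rightarrow> 'v::ab_group_add set) \<Rightarrow> ('v \<Rightarrow> 'v) \<Rightarrow> ('v \<Rightarrow> 'v) \<Rightarrow> ('v \<Rightarrow> 'v) \<Rightarrow> int \<Rightarrow> int \<Rightarrow> 'v set" where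
  "BN C d21 d10 d01 q m = tot d21 d10 d01 ` Nsp C d21 d01 (m - 1 - q) q"

definition ZN :: "(int \<Rightarrow> int \<Rightarrow> 'v::ab_group_add set) \<Rightarrow> ('v \<Rightarrow> 'v) \<Rightarrow> ('v \<Rightarrow> 'v) \<Rightarrow> ('v \<Rightarrow> 'v) \<Rightarrow> int \<Rightarrow> int \<Rightarrow> 'v set" where
  "ZN C d21 d10 d01 q m = {x \<in> Nsp C d21 d01 (m - q) q. tot d21 d10 d01 x = 0}"

definition Msp :: "('f::field \<Rightarrow> 'v \<Rightarrow> 'v::ab_group_add) \<Rightarrow> (int \<Rightarrow> int \<Rightarrow> 'v set) \<Rightarrow> ('v \<Rightarrow> 'v) \<Rightarrow> ('v \<Rightarrow> 'v) \<Rightarrow> ('v \<Rightarrow> 'v) \<Rightarrow> int \<Rightarrow> 'v set" where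
  "Msp s C d21 d10 d01 k = {\<eta> \<in> Ck s C k. \<forall>i j. i + j = k + 1 \<longrightarrow>
      comp s C i j (tot d21 d10 d01 \<eta>) \<in> BN C d21 d10 d01 j (k + 1)}"

definition Zcal :: "('f::field \<Rightarrow> 'v \<Rightarrow> 'v::ab_group_add) \<Rightarrow> (int \<Rightarrow> int \<Rightarrow> 'v set) \<Rightarrow> ('v \<Rightarrow> 'v) \<Rightarrow> ('v \<Rightarrow> 'v) \<Rightarrow> ('v \<Rightarrow> 'v) \<Rightarrow> int \<Rightarrow> int \<Rightarrow> 'v set" where
  "Zcal s C d21 d10 d01 k q = {proj s C q \<eta> | \<eta>. \<eta> \<in> Msp s C d21 d10 d01 k \<and>
      proj s C q (tot d21 d10 d01 \<eta>) = 0}"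

definition Bcal :: "('f::field \<Rightarrow> 'v \<Rightarrow> 'v::ab_group_add) \<Rightarrow> (int \<Rightarrow> int \<Rightarrow> 'v set) \<Rightarrow> ('v \<Rightarrow> 'v) \<Rightarrow> ('v \<Rightarrow> 'v) \<Rightarrow> ('v \<Rightarrow> 'v) \<Rightarrow> int \<Rightarrow> int \<Rightarrow> 'v set" where
  "Bcal s C d21 d10 d01 k q = proj s C q ` (tot d21 d10 d01 ` Ck s C (k - 1))"

definition Acal :: "('f::field \<Rightarrow> 'v \<Rightarrow> 'v::ab_group_add) \<Rightarrow> (int \<Rightarrow> int \<Rightarrow> 'v set) \<Rightarrow> ('v \<Rightarrow> 'v) \<Rightarrow> ('v \<Rightarrow> 'v) \<Rightarrow> ('v \<Rightarrow> 'v) \<Rightarrow> int \<Rightarrow> 'v set" where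
  "Acal s C d21 d10 d01 k = {proj s C 1 \<eta> | \<eta>. \<eta> \<in> Ck s C k \<and>
      proj s C 1 (tot d21 d10 d01 \<eta>) = 0}"

definition Jcal :: "('f::field \<Rightarrow> 'v \<Rightarrow> 'v::ab_group_add) \<Rightarrow> (int \<Rightarrow> int \<Rightarrow> 'v set) \<Rightarrow> ('v \<Rightarrow> 'v) \<Rightarrow> ('v \<Rightarrow> 'v) \<Rightarrow> ('v \<Rightarrow> 'v) \<Rightarrow> int \<Rightarrow> 'v set" where
  "Jcal s C d21 d10 d01 k = Acal s C d21 d10 d01 k \<inter> C (k - 1) 1"

text \<open>ker(varrho_k): those xi in J^k whose class
  [d21 xi_{k-1,1} + d10 eta_{k,0}] in H^{k+1}(N_0) vanishes, i.e. whose representative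
  lies in B^{k+1}(N_0, dbar), for a lift eta of xi as in the definition of rho_k
  (the class is independent of the lift, as stated in the context).\<close>
definition ker_varrho :: "('f::field \<Rightarrow> 'v \<Rightarrow> 'v::ab_group_add) \<Rightarrow> (int \<Rightarrow> int \<Rightarrow> 'v set) \<Rightarrow> ('v \<Rightarrow> 'v) \<Rightarrow> ('v \<Rightarrow> 'v) \<Rightarrow> ('v \<Rightarrow> 'v) \<Rightarrow> int \<Rightarrow> 'v set" where
  "ker_varrho s C d21 d10 d01 k = {\<xi> \<in> Jcal s C d21 d10 d01 k.
      \<exists>\<eta>. \<eta> \<in> Ck s C k \<and> proj s C 1 \<eta> = \<xi> \<and> proj s C 1 (tot d21 d10 d01 \<eta>) = 0 \<and>
        d21 (comp s C (k - 1) 1 \<xi>) + d10 (comp s C k 0 \<eta>) \<in> BN C d21 d10 d01 0 (k + 1)}"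

text \<open>Isomorphism of quotient spaces G/H \<cong> A/B (+) C/D (+) E/F (external direct sum):
  there is a linear map f from the external direct sum A (+) C (+) E into G which
  induces a linear bijection A/B (+) C/D (+) E/F \<rightarrow> G/H, i.e. f^{-1}(H) = B (+) D (+) F
  and f(A (+) C (+) E) + H = G.  (Every linear isomorphism of the quotients lifts to such
  an f, since G \<rightarrow> G/H has a linear section.)\<close>
definition quot_iso3 :: "('f::field \<Rightarrow> 'v \<Rightarrow> 'v::ab_group_add) \<Rightarrow> 'v set \<Rightarrow> 'v set \<Rightarrow> 'v set \<Rightarrow> 'v set
    \<Rightarrow> 'v set \<Rightarrow> 'v set \<Rightarrow> 'v set \<Rightarrow> 'v set \<Rightarrow> bool" where
  "quot_iso3 s G H A B C D E F \<longleftrightarrow>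
     (\<exists>f :: 'v \<Rightarrow> 'v \<Rightarrow> 'v \<Rightarrow> 'v.
        (\<forall>a\<in>A. \<forall>c\<in>C. \<forall>e\<in>E. f a c e \<in> G) \<and>
        (\<forall>a\<in>A. \<forall>c\<in>C. \<forall>e\<in>E. \<forall>a'\<in>A. \<forall>c'\<in>C. \<forall>e'\<in>E.
            f (a + a') (c + c') (e + e') = f a c e + f a' c' e') \<and>
        (\<forall>r. \<forall>a\<in>A. \<forall>c\<in>C. \<forall>e\<in>E. f (s r a) (s r c) (s r e) = s r (f a c e)) \<and>
        (\<forall>a\<in>A. \<forall>c\<in>C. \<forall>e\<in>E. f a c e \<in> H \<longleftrightarrow> a \<in> B \<and> c \<in> D \<and> e \<in> F) \<and>
        (\<forall>g\<in>G. \<exists>a\<in>A. \<exists>c\<in>C. \<exists>e\<in>E. g - f a c e \<in> H))"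

abbreviation lin_iso3 :: "('f::field \<Rightarrow> 'v \<Rightarrow> 'v::ab_group_add) \<Rightarrow> 'v set \<Rightarrow> 'v set \<Rightarrow> 'v set \<Rightarrow> 'v set \<Rightarrow> bool" where
  "lin_iso3 s G A C E \<equiv> quot_iso3 s G {0} A {0} C {0} E {0}"

end

theory Submission
  imports Defs
begin

(* Filter a subspace of C^2 = C^{2,0} + C^{1,1} + C^{0,2} first by its (0,2)-component phi and
   then by its (1,1)-component psi.  Over a field such a two-step filtration splits compatibly
   with a pair of subspaces B <= Z: extending a basis of phi(B) to one of phi(Z) gives a linear
   section of phi mapping phi(B) into B, and likewise for psi on the kernel of phi.  Applied to
   B^2 <= Z^2 this yields all three isomorphisms at once, once the graded pieces are identified:
   Z^2 \<inter> C^{2,0} = Z^2(N_0), phi(Z^2) = Zcal^2_2 and psi(Z^2 \<inter> ker phi) = ker varrho_2 on the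
   cocycle side, and B^2 \<inter> C^{2,0}, psi(B^2 \<inter> ker phi) = Bcal^2_1 \<inter> C^{1,1} and
   phi(B^2) = d01(C^{0,1}) on the coboundary side.  The two nontrivial identifications correct
   a cochain by elements of N whose coboundaries are the obstructing components. *)

context vector_space
begin

(* The components comp and proj are defined by THE, so they are only determined, and linear,
   on the span of the bigraded pieces. *)
definition linear_on :: "'b set \<Rightarrow> ('b \<Rightarrow> 'b) \<Rightarrow> bool" where
  "linear_on V f \<longleftrightarrow>
     (\<forall>x\<in>V. \<forall>y\<in>V. f (x + y) = f x + f y) \<and> (\<forall>c. \<forall>x\<in>V. f (c *s x) = c *s f x)"

lemma linear_on_add: "linear_on V f \<Longrightarrow> x \<in> V \<Longrightarrow> y \<in> V \<Longrightarrow> f (x + y) = f x + f y"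
  and linear_on_scale: "linear_on V f \<Longrightarrow> x \<in> V \<Longrightarrow> f (c *s x) = c *s f x"
  unfolding linear_on_def by blast+

lemma linear_on_subset: "linear_on V f \<Longrightarrow> W \<subseteq> V \<Longrightarrow> linear_on W f"
  unfolding linear_on_def by blast

lemma linear_on_0: "linear_on V f \<Longrightarrow> 0 \<in> V \<Longrightarrow> f 0 = 0"
  using linear_on_scale[of V f 0 0] by simp

lemma linear_on_diff:
  assumes "linear_on V f" "subspace V" "x \<in> V" "y \<in> V"
  shows "f (x - y) = f x - f y"
  using linear_on_add[OF assms(1) subspace_diff[OF assms(2-4)] assms(4)] by simp

lemma subspace_kernel_on:
  assumes "subspace V" "linear_on V f"
  shows "subspace {x \<in> V. f x = 0}"
  using assms linear_on_0[OF assms(2) subspace_0[OF assms(1)]]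
  by (auto simp: subspace_def linear_on_def)

lemma in_span_UnionE:
  assumes A: "\<And>i. subspace (A i)" and y: "y \<in> span (\<Union> (A ` I))"
  obtains z S where "finite S" "S \<subseteq> I" "\<forall>i\<in>S. z i \<in> A i" "y = sum z S"
proof -
  have "\<exists>z S. finite S \<and> S \<subseteq> I \<and> (\<forall>i\<in>S. z i \<in> A i) \<and> y = sum z S"
    using y
  proof (induction rule: span_induct_alt)
    case base
    show ?case by (intro exI[of _ "\<lambda>_. 0"] exI[of _ "{}"]) auto
  next
    case (step c x y)
    obtain j where j: "j \<in> I" "x \<in> A j" using step(1) by blast
    obtain z S where zS: "finite S" "S \<subseteq> I" "\<forall>i\<in>S. z i \<in> A i" "y = sum z S"
      using step(2) by blast
    define z' where "z' = z(j := c *s x + (if j \<in> S then z j else 0))"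
    have "sum z S = (if j \<in> S then z j else 0) + sum z (S - {j})"
      using zS(1) by (simp add: sum.remove)
    then have "c *s x + y = sum z' (insert j S)"
      using zS(1,4) by (simp add: z'_def sum.insert_remove add.assoc)
    moreover have "\<forall>i\<in>insert j S. z' i \<in> A i"
      using j zS(3) A by (auto simp: z'_def subspace_0 intro!: subspace_add subspace_scale)
    ultimately show ?case using zS(1,2) j(1) by blast
  qed
  then show ?thesis using that by blast
qed

lemma sum_in_span_Union: "S \<subseteq> I \<Longrightarrow> \<forall>i\<in>S. z i \<in> A i \<Longrightarrow> sum z S \<in> span (\<Union> (A ` I))"
  by (intro span_sum span_base) blast

lemma construct_right_inverse_on:
  assumes V: "subspace V" and f: "linear_on V f" and B: "independent B"
    and h: "\<And>b. b \<in> B \<Longrightarrow> h b \<in> V \<and> f (h b) = b"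
  obtains g where "Vector_Spaces.linear scale scale g" "\<And>b. b \<in> B \<Longrightarrow> g b = h b"
    "\<And>w. g w \<in> V" "\<And>w. w \<in> span B \<Longrightarrow> f (g w) = w"
proof -
  interpret vp: vector_space_pair scale scale by unfold_locales
  define g where "g = vp.construct B h"
  have lin_g: "Vector_Spaces.linear scale scale g"
    unfolding g_def by (rule vp.linear_construct[OF B])
  have g_basis: "b \<in> B \<Longrightarrow> g b = h b" for b
    unfolding g_def by (rule vp.construct_basis[OF B])
  have "span (h ` B) \<subseteq> V"
    using h by (intro span_minimal V) auto
  then have gV: "g w \<in> V" for w
    using vp.construct_in_span[OF B] unfolding g_def by blast
  have "f (g w) = w" if "w \<in> span B" for w
    using that
  proof (induction rule: span_induct_alt)
    case base
    show ?case using linear_on_0[OF f subspace_0[OF V]] vp.linear_0[OF lin_g] by simp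
  next
    case (step c x y)
    have "g (c *s x + y) = c *s h x + g y"
      using vp.linear_add[OF lin_g] vp.linear_scale[OF lin_g] g_basis step(1) by simp
    moreover have "f (c *s h x + g y) = c *s f (h x) + f (g y)"
      using h[OF step(1)] gV linear_on_add[OF f] linear_on_scale[OF f] subspace_scale[OF V]
      by metis
    ultimately show ?case
      using h[OF step(1)] step(2) by simp
  qed
  then show ?thesis using that lin_g g_basis gV by blast
qed

lemma exists_compatible_section:
  assumes V: "subspace V" and V': "subspace V'" "V' \<subseteq> V" and f: "linear_on V f"
  obtains g where "Vector_Spaces.linear scale scale g"
    "\<And>w. w \<in> f ` V \<Longrightarrow> g w \<in> V \<and> f (g w) = w" "\<And>w. w \<in> f ` V' \<Longrightarrow> g w \<in> V'"
proof -
  obtain B' where B': "B' \<subseteq> f ` V'" "independent B'" "f ` V' \<subseteq> span B'"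
    using maximal_independent_subset[of "f ` V'"] by blast
  obtain B where B: "B' \<subseteq> B" "B \<subseteq> f ` V" "independent B" "f ` V \<subseteq> span B"
  proof (rule maximal_independent_subset_extend[OF _ B'(2)])
    show "B' \<subseteq> f ` V" using B'(1) V'(2) by blast
  qed blast
  have "\<exists>x. x \<in> V \<and> f x = b \<and> (b \<in> B' \<longrightarrow> x \<in> V')" if "b \<in> B" for b
  proof (cases "b \<in> B'")
    case True
    then obtain x where "x \<in> V'" "f x = b" using B'(1) by blast
    then show ?thesis using V'(2) by blast
  next
    case False
    then show ?thesis using B(2) that by blast
  qed
  then obtain h where h: "\<And>b. b \<in> B \<Longrightarrow> h b \<in> V \<and> f (h b) = b \<and> (b \<in> B' \<longrightarrow> h b \<in> V')"
    by metis
  obtain g where lin_g: "Vector_Spaces.linear scale scale g" and g_basis: "\<And>b. b \<in> B \<Longrightarrow> g b = h b"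
    and g: "\<And>w. g w \<in> V" "\<And>w. w \<in> span B \<Longrightarrow> f (g w) = w"
  proof (rule construct_right_inverse_on[OF V f B(3)])
    show "\<And>b. b \<in> B \<Longrightarrow> h b \<in> V \<and> f (h b) = b" using h by blast
  qed blast
  interpret vp: vector_space_pair scale scale by unfold_locales
  have "g ` span B' = span (g ` B')" by (rule vp.linear_span_image[OF lin_g, symmetric])
  also have "\<dots> = span (h ` B')" using B(1) g_basis by (metis image_cong subset_eq)
  also have "\<dots> \<subseteq> V'" using h B(1) by (intro span_minimal V'(1)) auto
  finally have "g w \<in> V'" if "w \<in> f ` V'" for w using B'(3) that by blast
  show ?thesis
  proof (rule that[OF lin_g])
    show "g w \<in> V \<and> f (g w) = w" if "w \<in> f ` V" for w using g B(4) that by blast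
  qed fact
qed

lemma compatible_section_sum:
  assumes Z: "subspace Z" and B: "subspace B" and \<phi>: "linear_on Z \<phi>"
    and g: "\<And>e. e \<in> \<phi> ` Z \<Longrightarrow> g e \<in> Z \<and> \<phi> (g e) = e" "\<And>e. e \<in> \<phi> ` B \<Longrightarrow> g e \<in> B"
    and k: "k \<in> Z" "\<phi> k = 0" and e: "e \<in> \<phi> ` Z"
  shows "k + g e \<in> Z" and "\<phi> (k + g e) = e" and "k + g e \<in> B \<longleftrightarrow> k \<in> B \<and> e \<in> \<phi> ` B"
proof -
  have ge: "g e \<in> Z" "\<phi> (g e) = e" using g(1)[OF e] by auto
  show "k + g e \<in> Z" using subspace_add[OF Z k(1) ge(1)] .
  show \<phi>_sum: "\<phi> (k + g e) = e" using linear_on_add[OF \<phi> k(1) ge(1)] k(2) ge(2) by simp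
  show "k + g e \<in> B \<longleftrightarrow> k \<in> B \<and> e \<in> \<phi> ` B"
  proof
    assume kB: "k + g e \<in> B"
    then have eB: "e \<in> \<phi> ` B" using \<phi>_sum by (metis image_eqI)
    have "(k + g e) - g e \<in> B" using subspace_diff[OF B kB g(2)[OF eB]] .
    then show "k \<in> B \<and> e \<in> \<phi> ` B" using eB by simp
  next
    assume "k \<in> B \<and> e \<in> \<phi> ` B"
    then show "k + g e \<in> B" using g(2) subspace_add[OF B] by blast
  qed
qed

lemma section_residual_in_kernel:
  assumes Z: "subspace Z" and \<phi>: "linear_on Z \<phi>"
    and g: "\<And>e. e \<in> \<phi> ` Z \<Longrightarrow> g e \<in> Z \<and> \<phi> (g e) = e" and x: "x \<in> Z"
  shows "x - g (\<phi> x) \<in> Z" and "\<phi> (x - g (\<phi> x)) = 0"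
  using g[of "\<phi> x"] x subspace_diff[OF Z] linear_on_diff[OF \<phi> Z] by auto

lemma quot_iso3I:
  assumes add: "\<And>a c e a' c' e'. F (a + a') (c + c') (e + e') = F a c e + F a' c' e'"
    and scale: "\<And>r a c e. F (r *s a) (r *s c) (r *s e) = r *s F a c e"
    and into: "\<And>a c e. a \<in> A \<Longrightarrow> c \<in> K \<Longrightarrow> e \<in> E \<Longrightarrow>
      F a c e \<in> G \<and> (F a c e \<in> H \<longleftrightarrow> a \<in> A' \<and> c \<in> K' \<and> e \<in> E')"
    and onto: "\<And>x. x \<in> G \<Longrightarrow> \<exists>a\<in>A. \<exists>c\<in>K. \<exists>e\<in>E. x = F a c e"
    and H: "0 \<in> H"
  shows "quot_iso3 scale G H A A' K K' E E'"
  unfolding quot_iso3_def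
proof (intro exI[of _ F] conjI ballI allI)
  fix x assume "x \<in> G"
  then obtain a c e where ace: "a \<in> A" "c \<in> K" "e \<in> E" and "x = F a c e"
    using onto by blast
  then have "x - F a c e \<in> H" using H by simp
  with ace show "\<exists>a\<in>A. \<exists>c\<in>K. \<exists>e\<in>E. x - F a c e \<in> H" by blast
qed (use add scale into in auto)

lemma quot_iso3_two_step_filtration:
  assumes Z: "subspace Z" and B: "subspace B" "B \<subseteq> Z"
    and \<phi>: "linear_on Z \<phi>" and \<psi>: "linear_on Z \<psi>"
  shows "quot_iso3 scale Z B {x \<in> Z. \<phi> x = 0 \<and> \<psi> x = 0} {x \<in> B. \<phi> x = 0 \<and> \<psi> x = 0}
    (\<psi> ` {x \<in> Z. \<phi> x = 0}) (\<psi> ` {x \<in> B. \<phi> x = 0}) (\<phi> ` Z) (\<phi> ` B)"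
    (is "quot_iso3 scale Z B ?A ?A' ?K ?K' ?E ?E'")
proof -
  let ?V = "{x \<in> Z. \<phi> x = 0}" and ?V' = "{x \<in> B. \<phi> x = 0}"
  obtain g1 where lin_g1: "Vector_Spaces.linear scale scale g1"
    and g1: "\<And>e. e \<in> ?E \<Longrightarrow> g1 e \<in> Z \<and> \<phi> (g1 e) = e" "\<And>e. e \<in> ?E' \<Longrightarrow> g1 e \<in> B"
    using exists_compatible_section[OF Z B \<phi>] by blast
  have V: "subspace ?V" by (rule subspace_kernel_on[OF Z \<phi>])
  have V': "subspace ?V'" by (rule subspace_kernel_on[OF B(1) linear_on_subset[OF \<phi> B(2)]])
  have \<psi>V: "linear_on ?V \<psi>" by (rule linear_on_subset[OF \<psi>]) blast
  obtain g2 where lin_g2: "Vector_Spaces.linear scale scale g2"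
    and g2: "\<And>c. c \<in> ?K \<Longrightarrow> g2 c \<in> ?V \<and> \<psi> (g2 c) = c" "\<And>c. c \<in> ?K' \<Longrightarrow> g2 c \<in> ?V'"
    using exists_compatible_section[OF V V' _ \<psi>V] B(2) by blast
  define F where "F a c e = (a + g2 c) + g1 e" for a c e
  show ?thesis
  proof (rule quot_iso3I[where F = F])
    show "F (a + a') (c + c') (e + e') = F a c e + F a' c' e'" for a c e a' c' e'
      using lin_g1 lin_g2 unfolding F_def linear_iff by (simp add: ac_simps)
    show "F (r *s a) (r *s c) (r *s e) = r *s F a c e" for r a c e
      using lin_g1 lin_g2 unfolding F_def linear_iff by (simp add: scale_right_distrib)
    show "F a c e \<in> Z \<and> (F a c e \<in> B \<longleftrightarrow> a \<in> ?A' \<and> c \<in> ?K' \<and> e \<in> ?E')"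
      if "a \<in> ?A" "c \<in> ?K" "e \<in> ?E" for a c e
    proof -
      have inner: "a + g2 c \<in> ?V" "a + g2 c \<in> ?V' \<longleftrightarrow> a \<in> ?V' \<and> c \<in> ?K'"
        using compatible_section_sum[OF V V' \<psi>V g2, of a c] that by auto
      have outer: "F a c e \<in> Z" "F a c e \<in> B \<longleftrightarrow> a + g2 c \<in> B \<and> e \<in> ?E'"
        using compatible_section_sum[OF Z B(1) \<phi> g1, of "a + g2 c" e] inner(1) that(3)
        unfolding F_def by auto
      show ?thesis using outer inner that(1) by auto
    qed
    show "\<exists>a\<in>?A. \<exists>c\<in>?K. \<exists>e\<in>?E. x = F a c e" if "x \<in> Z" for x
    proof -
      define x1 where "x1 = x - g1 (\<phi> x)"
      have x1: "x1 \<in> ?V" using section_residual_in_kernel[OF Z \<phi> g1(1) that] unfolding x1_def by simp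
      define a where "a = x1 - g2 (\<psi> x1)"
      have "a \<in> ?A" using section_residual_in_kernel[OF V \<psi>V g2(1) x1] unfolding a_def by simp
      moreover have "x = F a (\<psi> x1) (\<phi> x)" unfolding F_def a_def x1_def by simp
      ultimately show ?thesis using x1 that by blast
    qed
    show "0 \<in> B" by (rule subspace_0[OF B(1)])
  qed
qed

lemma lin_iso3_two_step_filtration:
  assumes Z: "subspace Z" and \<phi>: "linear_on Z \<phi>" and \<psi>: "linear_on Z \<psi>"
  shows "lin_iso3 scale Z {x \<in> Z. \<phi> x = 0 \<and> \<psi> x = 0} (\<psi> ` {x \<in> Z. \<phi> x = 0}) (\<phi> ` Z)"
proof -
  have "\<phi> 0 = 0" "\<psi> 0 = 0" using linear_on_0 \<phi> \<psi> subspace_0[OF Z] by auto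
  then have "{x \<in> {0}. \<phi> x = 0 \<and> \<psi> x = 0} = {0}" "\<psi> ` {x \<in> {0}. \<phi> x = 0} = {0}" "\<phi> ` {0} = {0}"
    by auto
  then show ?thesis
    using quot_iso3_two_step_filtration[OF Z subspace_single_0 _ \<phi> \<psi>] subspace_0[OF Z] by simp
qed

end

locale bigraded_complex = vector_space s for s :: "'f::field \<Rightarrow> 'v::ab_group_add \<Rightarrow> 'v" +
  fixes C :: "int \<Rightarrow> int \<Rightarrow> 'v set" and d21 d10 d01 :: "'v \<Rightarrow> 'v"
  assumes sub: "\<And>p q. subspace (C p q)"
    and zero: "\<And>p q. p < 0 \<or> q < 0 \<Longrightarrow> C p q = {0}"
    and dsum: "indep_family C"
    and lin: "Vector_Spaces.linear s s d21" "Vector_Spaces.linear s s d10" "Vector_Spaces.linear s s d01"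
    and bideg: "\<And>p q x. x \<in> C p q \<Longrightarrow> d21 x \<in> C (p + 2) (q - 1)"
               "\<And>p q x. x \<in> C p q \<Longrightarrow> d10 x \<in> C (p + 1) q"
               "\<And>p q x. x \<in> C p q \<Longrightarrow> d01 x \<in> C p (q + 1)"
    and sq: "\<And>k x. x \<in> Ck s C k \<Longrightarrow> tot d21 d10 d01 (tot d21 d10 d01 x) = 0"
begin

lemma C_0: "0 \<in> C p q"
  and C_add: "x \<in> C p q \<Longrightarrow> y \<in> C p q \<Longrightarrow> x + y \<in> C p q"
  and C_diff: "x \<in> C p q \<Longrightarrow> y \<in> C p q \<Longrightarrow> x - y \<in> C p q"
  and C_scale: "x \<in> C p q \<Longrightarrow> s c x \<in> C p q"
  by (simp_all add: sub subspace_0 subspace_add subspace_diff subspace_scale)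

lemma subspace_C_pair: "subspace (case_prod C i)"
  by (simp add: sub split: prod.splits)

lemma span_C: "span (C p q) = C p q"
  by (simp add: span_eq_iff sub)

lemma span_family_disjoint:
  assumes "I \<inter> J = {}" "y \<in> span (\<Union> (case_prod C ` I))" "y \<in> span (\<Union> (case_prod C ` J))"
  shows "y = 0"
proof -
  obtain z S where z: "finite S" "S \<subseteq> I" "\<forall>i\<in>S. z i \<in> case_prod C i" "y = sum z S"
    by (rule in_span_UnionE[OF subspace_C_pair assms(2)])
  obtain z' T where z': "finite T" "T \<subseteq> J" "\<forall>i\<in>T. z' i \<in> case_prod C i" "y = sum z' T"
    by (rule in_span_UnionE[OF subspace_C_pair assms(3)])
  have ST: "S \<inter> T = {}" using assms(1) z(2) z'(2) by blast
  define w where "w i = (if i \<in> S then z i else - z' i)" for i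
  have "sum w T = - sum z' T"
    using ST by (auto simp: w_def sum_negf[symmetric] intro!: sum.cong)
  then have "sum w (S \<union> T) = sum z S - sum z' T"
    using ST z(1) z'(1) by (simp add: sum.union_disjoint w_def)
  then have "sum w (S \<union> T) = 0" using z(4) z'(4) by simp
  moreover have "\<forall>i\<in>S \<union> T. w i \<in> case_prod C i"
    using z(3) z'(3) sub by (auto simp: w_def intro: subspace_neg split: prod.splits)
  ultimately have "\<forall>i\<in>S. w i = 0"
    using dsum z(1) z'(1) unfolding indep_family_def by (auto split: prod.splits)
  then show ?thesis using z(4) by (simp add: w_def)
qed

lemma the_family_split_sum:
  assumes S: "finite S" "\<forall>i\<in>S. z i \<in> case_prod C i"
  shows "(THE y. y \<in> span (\<Union> (case_prod C ` {i. P i})) \<and>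
            sum z S - y \<in> span (\<Union> (case_prod C ` {i. \<not> P i}))) = (\<Sum>i\<in>S. if P i then z i else 0)"
    (is "(THE y. y \<in> ?H \<and> _ - y \<in> ?L) = ?y0")
proof (rule the_equality)
  have "?y0 = sum z {i\<in>S. P i}" using S(1) by (simp add: sum.inter_filter)
  also have "\<dots> \<in> ?H" by (rule sum_in_span_Union) (use S(2) in auto)
  finally have y0: "?y0 \<in> ?H" .
  have "sum z S - ?y0 = (\<Sum>i\<in>S. if \<not> P i then z i else 0)"
    by (subst sum_subtractf[symmetric]) (rule sum.cong; simp)
  also have "\<dots> = sum z {i\<in>S. \<not> P i}" using S(1) by (rule sum.inter_filter[symmetric])
  also have "\<dots> \<in> ?L" by (rule sum_in_span_Union) (use S(2) in auto)
  finally have y0': "sum z S - ?y0 \<in> ?L" .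
  show "?y0 \<in> ?H \<and> sum z S - ?y0 \<in> ?L" using y0 y0' ..
  fix y assume y: "y \<in> ?H \<and> sum z S - y \<in> ?L"
  have in_H: "y - ?y0 \<in> ?H" using span_diff[OF conjunct1[OF y] y0] .
  have eq: "y - ?y0 = (sum z S - ?y0) - (sum z S - y)" by simp
  have in_L: "y - ?y0 \<in> ?L" unfolding eq using span_diff[OF y0' conjunct2[OF y]] .
  have "{i. P i} \<inter> {i. \<not> P i} = {}" by blast
  from span_family_disjoint[OF this in_H in_L] show "y = ?y0" by simp
qed

lemma comp_sum:
  assumes "finite S" "\<forall>i\<in>S. z i \<in> case_prod C i"
  shows "comp s C p q (sum z S) = (\<Sum>i\<in>S. if i = (p, q) then z i else 0)"
proof -
  have "C p q = span (\<Union> (case_prod C ` {i. i = (p, q)}))" by (simp add: span_C)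
  moreover have "{C a b | a b. (a, b) \<noteq> (p, q)} = case_prod C ` {i. i \<noteq> (p, q)}" by force
  ultimately show ?thesis
    unfolding comp_def by (simp only: the_family_split_sum[OF assms])
qed

lemma proj_sum:
  assumes "finite S" "\<forall>i\<in>S. z i \<in> case_prod C i"
  shows "proj s C q (sum z S) = (\<Sum>i\<in>S. if q \<le> snd i then z i else 0)"
proof -
  have upper: "{C i j | i j. q \<le> j} = case_prod C ` {i. q \<le> snd i}"
    and lower: "{C i j | i j. j < q} = case_prod C ` {i. \<not> q \<le> snd i}" by force+
  show ?thesis
    unfolding proj_def upper lower by (rule the_family_split_sum[OF assms])
qed

abbreviation dd :: "'v \<Rightarrow> 'v" where "dd \<equiv> tot d21 d10 d01"

lemma linear_dd: "Vector_Spaces.linear s s dd"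
proof -
  interpret vp: vector_space_pair s s ..
  have "dd = (\<lambda>x. d21 x + d10 x + d01 x)" by (simp add: tot_def fun_eq_iff)
  then show ?thesis by (simp add: vp.linear_compose_add lin)
qed

interpretation dd: Vector_Spaces.linear s s dd by (rule linear_dd)
interpretation d21: Vector_Spaces.linear s s d21 by (rule lin(1))
interpretation d10: Vector_Spaces.linear s s d10 by (rule lin(2))
interpretation d01: Vector_Spaces.linear s s d01 by (rule lin(3))

lemma d_C_1_0: "a \<in> C 1 0 \<Longrightarrow> d21 a = 0 \<and> d10 a \<in> C 2 0 \<and> d01 a \<in> C 1 1"
  using bideg(1)[of a 1 0] bideg(2)[of a 1 0] bideg(3)[of a 1 0] zero[of 3 "-1"] by simp

lemma d_C_0_1: "b \<in> C 0 1 \<Longrightarrow> d21 b \<in> C 2 0 \<and> d10 b \<in> C 1 1 \<and> d01 b \<in> C 0 2"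
  using bideg(1)[of b 0 1] bideg(2)[of b 0 1] bideg(3)[of b 0 1] by simp

lemma d_C_2_0: "u \<in> C 2 0 \<Longrightarrow> d21 u = 0 \<and> d10 u \<in> C 3 0 \<and> d01 u \<in> C 2 1"
  using bideg(1)[of u 2 0] bideg(2)[of u 2 0] bideg(3)[of u 2 0] zero[of 4 "-1"] by simp

lemma d_C_1_1: "v \<in> C 1 1 \<Longrightarrow> d21 v \<in> C 3 0 \<and> d10 v \<in> C 2 1 \<and> d01 v \<in> C 1 2"
  using bideg(1)[of v 1 1] bideg(2)[of v 1 1] bideg(3)[of v 1 1] by simp

lemma d_C_0_2: "w \<in> C 0 2 \<Longrightarrow> d21 w \<in> C 2 1 \<and> d10 w \<in> C 1 2 \<and> d01 w \<in> C 0 3"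
  using bideg(1)[of w 0 2] bideg(2)[of w 0 2] bideg(3)[of w 0 2] by simp

lemma Ck_eq_span_diagonal:
  assumes "0 \<le> k"
  shows "Ck s C k = span (\<Union>p\<in>{0..k}. C p (k - p))"
proof -
  have "\<Union>{C p q | p q. p + q = k} = (\<Union>p\<in>{0..k}. C p (k - p))"
  proof (intro equalityI subsetI)
    fix x assume "x \<in> \<Union>{C p q | p q. p + q = k}"
    then obtain p q where pq: "p + q = k" "x \<in> C p q" by blast
    show "x \<in> (\<Union>p\<in>{0..k}. C p (k - p))"
    proof (cases "p < 0 \<or> q < 0")
      case True
      then have "x = 0" using pq(2) zero by blast
      then have "x \<in> C 0 (k - 0)" using C_0 by simp
      then show ?thesis using assms by force
    next
      case False
      then have "p \<in> {0..k}" "q = k - p" using pq(1) by auto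
      then show ?thesis using pq(2) by blast
    qed
  qed force
  then show ?thesis unfolding Ck_def by simp
qed

lemma Ck_1: "Ck s C 1 = {a + b | a b. a \<in> C 1 0 \<and> b \<in> C 0 1}"
proof -
  have "{0..1::int} = {1, 0}" by auto
  then have "Ck s C 1 = span (C 1 0 \<union> C 0 1)" by (simp add: Ck_eq_span_diagonal)
  then show ?thesis by (simp add: span_Un span_C)
qed

lemma Ck_2: "Ck s C 2 = {u + v + w | u v w. u \<in> C 2 0 \<and> v \<in> C 1 1 \<and> w \<in> C 0 2}"
proof -
  have "{0..2::int} = {2, 1, 0}" by auto
  then have "Ck s C 2 = span (C 2 0 \<union> (C 1 1 \<union> C 0 2))" by (simp add: Ck_eq_span_diagonal)
  then show ?thesis by (auto simp: span_Un span_C add.assoc)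
qed

lemma Ck_1E:
  assumes "x \<in> Ck s C 1"
  obtains a b where "a \<in> C 1 0" "b \<in> C 0 1" "x = a + b"
  using assms unfolding Ck_1 by blast

lemma Ck_2E:
  assumes "x \<in> Ck s C 2"
  obtains u v w where "u \<in> C 2 0" "v \<in> C 1 1" "w \<in> C 0 2" "x = u + v + w"
  using assms unfolding Ck_2 by blast

lemma Ck_1I: "a \<in> C 1 0 \<Longrightarrow> b \<in> C 0 1 \<Longrightarrow> a + b \<in> Ck s C 1"
  and Ck_2I: "u \<in> C 2 0 \<Longrightarrow> v \<in> C 1 1 \<Longrightarrow> w \<in> C 0 2 \<Longrightarrow> u + v + w \<in> Ck s C 2"
  unfolding Ck_1 Ck_2 by blast+

lemma comp_0: "comp s C p q 0 = 0"
  using comp_sum[of "{}"] by simp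

lemma components_deg2:
  assumes "u \<in> C 2 0" "v \<in> C 1 1" "w \<in> C 0 2"
  shows "comp s C p q (u + v + w) =
      (if (p, q) = (2, 0) then u else 0) + (if (p, q) = (1, 1) then v else 0) + (if (p, q) = (0, 2) then w else 0)"
    and "proj s C q (u + v + w) = (if q \<le> 0 then u else 0) + (if q \<le> 1 then v else 0) + (if q \<le> 2 then w else 0)"
proof -
  define z where "z i = (if i = (2, 0) then u else if i = (1, 1) then v else w)" for i :: "int \<times> int"
  let ?S = "{(2, 0), (1, 1), (0, 2)} :: (int \<times> int) set"
  have sum: "u + v + w = sum z ?S" by (simp add: z_def add.assoc)
  have zS: "finite ?S" "\<forall>i\<in>?S. z i \<in> case_prod C i" using assms by (auto simp: z_def)
  show "comp s C p q (u + v + w) =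
      (if (p, q) = (2, 0) then u else 0) + (if (p, q) = (1, 1) then v else 0) + (if (p, q) = (0, 2) then w else 0)"
    unfolding sum comp_sum[OF zS] by (simp add: z_def add.assoc)
  show "proj s C q (u + v + w) = (if q \<le> 0 then u else 0) + (if q \<le> 1 then v else 0) + (if q \<le> 2 then w else 0)"
    unfolding sum proj_sum[OF zS] by (simp add: z_def add.assoc)
qed

lemma components_deg3:
  assumes "t30 \<in> C 3 0" "t21 \<in> C 2 1" "t12 \<in> C 1 2" "t03 \<in> C 0 3"
  shows "comp s C p q (t30 + t21 + t12 + t03) =
      (if (p, q) = (3, 0) then t30 else 0) + (if (p, q) = (2, 1) then t21 else 0)
      + (if (p, q) = (1, 2) then t12 else 0) + (if (p, q) = (0, 3) then t03 else 0)"
    and "proj s C q (t30 + t21 + t12 + t03) = (if q \<le> 0 then t30 else 0) + (if q \<le> 1 then t21 else 0)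
      + (if q \<le> 2 then t12 else 0) + (if q \<le> 3 then t03 else 0)"
proof -
  define z where "z i = (if i = (3, 0) then t30 else if i = (2, 1) then t21 else if i = (1, 2) then t12 else t03)"
    for i :: "int \<times> int"
  let ?S = "{(3, 0), (2, 1), (1, 2), (0, 3)} :: (int \<times> int) set"
  have sum: "t30 + t21 + t12 + t03 = sum z ?S" by (simp add: z_def add.assoc)
  have zS: "finite ?S" "\<forall>i\<in>?S. z i \<in> case_prod C i" using assms by (auto simp: z_def)
  show "comp s C p q (t30 + t21 + t12 + t03) =
      (if (p, q) = (3, 0) then t30 else 0) + (if (p, q) = (2, 1) then t21 else 0)
      + (if (p, q) = (1, 2) then t12 else 0) + (if (p, q) = (0, 3) then t03 else 0)"
    unfolding sum comp_sum[OF zS] by (simp add: z_def add.assoc)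
  show "proj s C q (t30 + t21 + t12 + t03) = (if q \<le> 0 then t30 else 0) + (if q \<le> 1 then t21 else 0)
      + (if q \<le> 2 then t12 else 0) + (if q \<le> 3 then t03 else 0)"
    unfolding sum proj_sum[OF zS] by (simp add: z_def add.assoc)
qed

lemma deg2_sum_eq_iff:
  assumes "u \<in> C 2 0" "v \<in> C 1 1" "w \<in> C 0 2" "u' \<in> C 2 0" "v' \<in> C 1 1" "w' \<in> C 0 2"
  shows "u + v + w = u' + v' + w' \<longleftrightarrow> u = u' \<and> v = v' \<and> w = w'"
proof
  assume "u + v + w = u' + v' + w'"
  then have "comp s C p q (u + v + w) = comp s C p q (u' + v' + w')" for p q by simp
  from this[of 2 0] this[of 1 1] this[of 0 2] show "u = u' \<and> v = v' \<and> w = w'"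
    unfolding components_deg2(1)[OF assms(1-3)] components_deg2(1)[OF assms(4-6)] by simp
qed simp

lemma deg3_sum_eq_0_iff:
  assumes "t30 \<in> C 3 0" "t21 \<in> C 2 1" "t12 \<in> C 1 2" "t03 \<in> C 0 3"
  shows "t30 + t21 + t12 + t03 = 0 \<longleftrightarrow> t30 = 0 \<and> t21 = 0 \<and> t12 = 0 \<and> t03 = 0"
  using components_deg3(1)[OF assms, of 3 0] components_deg3(1)[OF assms, of 2 1]
    components_deg3(1)[OF assms, of 1 2] components_deg3(1)[OF assms, of 0 3] comp_0
  by auto

lemma linear_on_comp_deg2: "linear_on (Ck s C 2) (comp s C p q)"
  unfolding linear_on_def
proof (intro conjI ballI allI)
  fix x y assume "x \<in> Ck s C 2" "y \<in> Ck s C 2"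
  then obtain u v w u' v' w' where x: "u \<in> C 2 0" "v \<in> C 1 1" "w \<in> C 0 2" "x = u + v + w"
    and y: "u' \<in> C 2 0" "v' \<in> C 1 1" "w' \<in> C 0 2" "y = u' + v' + w'"
    by (metis Ck_2E)
  have "x + y = (u + u') + (v + v') + (w + w')" using x(4) y(4) by (simp add: ac_simps)
  then show "comp s C p q (x + y) = comp s C p q x + comp s C p q y"
    using components_deg2(1)[OF x(1-3)] components_deg2(1)[OF y(1-3)]
      components_deg2(1)[OF C_add C_add C_add, OF x(1) y(1) x(2) y(2) x(3) y(3)] x(4) y(4)
    by (simp add: ac_simps)
next
  fix c x assume "x \<in> Ck s C 2"
  then obtain u v w where x: "u \<in> C 2 0" "v \<in> C 1 1" "w \<in> C 0 2" "x = u + v + w"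
    by (rule Ck_2E)
  have "s c x = s c u + s c v + s c w" using x(4) by (simp add: scale_right_distrib)
  then show "comp s C p q (s c x) = s c (comp s C p q x)"
    using components_deg2(1)[OF x(1-3)] components_deg2(1)[OF C_scale C_scale C_scale, OF x(1-3)] x(4)
    by (simp add: scale_right_distrib)
qed

lemma dd_deg1:
  assumes "a \<in> C 1 0" "b \<in> C 0 1"
  shows "dd (a + b) = (d10 a + d21 b) + (d01 a + d10 b) + d01 b"
    and "d10 a + d21 b \<in> C 2 0" "d01 a + d10 b \<in> C 1 1" "d01 b \<in> C 0 2"
  using d_C_1_0[OF assms(1)] d_C_0_1[OF assms(2)]
  by (auto simp: tot_def d21.add d10.add d01.add ac_simps intro: C_add)

lemma dd_deg2:
  assumes "u \<in> C 2 0" "v \<in> C 1 1" "w \<in> C 0 2"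
  shows "dd (u + v + w) = (d10 u + d21 v) + (d01 u + d10 v + d21 w) + (d01 v + d10 w) + d01 w"
    and "d10 u + d21 v \<in> C 3 0" "d01 u + d10 v + d21 w \<in> C 2 1" "d01 v + d10 w \<in> C 1 2" "d01 w \<in> C 0 3"
  using d_C_2_0[OF assms(1)] d_C_1_1[OF assms(2)] d_C_0_2[OF assms(3)]
  by (auto simp: tot_def d21.add d10.add d01.add ac_simps intro: C_add)

lemma proj_0: "proj s C q 0 = 0"
  using proj_sum[of "{}"] by simp

lemma zero_in_BN: "0 \<in> BN C d21 d10 d01 q m"
  unfolding BN_def Nsp_def using C_0 dd.zero d21.zero d01.zero by (metis (mono_tags, lifting) image_eqI mem_Collect_eq)

abbreviation Z2 :: "'v set" where "Z2 \<equiv> {x \<in> Ck s C 2. dd x = 0}"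
abbreviation B2 :: "'v set" where "B2 \<equiv> dd ` Ck s C 1"

lemma B2E:
  assumes "x \<in> B2"
  obtains a b where "a \<in> C 1 0" "b \<in> C 0 1" "x = (d10 a + d21 b) + (d01 a + d10 b) + d01 b"
  using assms by (metis Ck_1E dd_deg1(1) imageE)

lemma dd_deg1_in_B2: "a \<in> C 1 0 \<Longrightarrow> b \<in> C 0 1 \<Longrightarrow> (d10 a + d21 b) + (d01 a + d10 b) + d01 b \<in> B2"
  by (metis Ck_1I dd_deg1(1) image_eqI)

lemma subspace_Ck: "subspace (Ck s C k)"
  unfolding Ck_def by simp

lemma subspace_Z2: "subspace Z2"
proof -
  have "Z2 = Ck s C 2 \<inter> {x. dd x = 0}" by blast
  then show ?thesis by (simp add: subspace_inter subspace_Ck dd.subspace_kernel)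
qed

lemma subspace_B2: "subspace B2"
  by (rule dd.subspace_image[OF subspace_Ck])

lemma B2_subset_Z2: "B2 \<subseteq> Z2"
proof
  fix x assume x: "x \<in> B2"
  then obtain a b where ab: "a \<in> C 1 0" "b \<in> C 0 1" "x = (d10 a + d21 b) + (d01 a + d10 b) + d01 b"
    by (rule B2E)
  then have "x \<in> Ck s C 2" using dd_deg1(2-4)[OF ab(1,2)] by (simp add: Ck_2I)
  moreover have "dd x = 0" using x sq by blast
  ultimately show "x \<in> Z2" by blast
qed

lemma Int_C_2_0_eq:
  assumes "W \<subseteq> Ck s C 2"
  shows "W \<inter> C 2 0 = {x \<in> W. comp s C 0 2 x = 0 \<and> comp s C 1 1 x = 0}"
proof (intro equalityI subsetI)
  fix x assume "x \<in> W \<inter> C 2 0"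
  then show "x \<in> {x \<in> W. comp s C 0 2 x = 0 \<and> comp s C 1 1 x = 0}"
    using components_deg2(1)[OF _ C_0 C_0, of x] by auto
next
  fix x assume x: "x \<in> {x \<in> W. comp s C 0 2 x = 0 \<and> comp s C 1 1 x = 0}"
  then obtain u v w where uvw: "u \<in> C 2 0" "v \<in> C 1 1" "w \<in> C 0 2" "x = u + v + w"
    using assms Ck_2E by blast
  then have "v = 0" "w = 0" using x components_deg2(1)[OF uvw(1-3)] by auto
  then show "x \<in> W \<inter> C 2 0" using x uvw by simp
qed

lemma ZN_0_2_eq: "ZN C d21 d10 d01 0 2 = Z2 \<inter> C 2 0"
proof (intro equalityI subsetI)
  fix x assume "x \<in> ZN C d21 d10 d01 0 2"
  then show "x \<in> Z2 \<inter> C 2 0" unfolding ZN_def Nsp_def using Ck_2I[OF _ C_0 C_0, of x] by auto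
next
  fix x assume x: "x \<in> Z2 \<inter> C 2 0"
  note d = d_C_2_0[of x]
  have "d10 x + d01 x + 0 + 0 = 0" using x d unfolding tot_def by simp
  then have "d01 x = 0" using deg3_sum_eq_0_iff[OF _ _ C_0 C_0] x d by blast
  then show "x \<in> ZN C d21 d10 d01 0 2" unfolding ZN_def Nsp_def using x d by auto
qed

lemma d01_image_eq: "d01 ` C 0 1 = comp s C 0 2 ` B2"
proof (intro equalityI subsetI)
  fix y assume "y \<in> d01 ` C 0 1"
  then obtain b where b: "b \<in> C 0 1" "y = d01 b" by blast
  let ?x = "(d10 0 + d21 b) + (d01 0 + d10 b) + d01 b"
  have "?x \<in> B2" by (rule dd_deg1_in_B2[OF C_0 b(1)])
  moreover have "comp s C 0 2 ?x = y"
    using components_deg2(1)[OF dd_deg1(2-4)[OF C_0 b(1)]] b(2) by simp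
  ultimately show "y \<in> comp s C 0 2 ` B2" by (metis image_eqI)
next
  fix y assume "y \<in> comp s C 0 2 ` B2"
  then obtain x where "x \<in> B2" "y = comp s C 0 2 x" by blast
  then obtain a b where ab: "a \<in> C 1 0" "b \<in> C 0 1" "y = comp s C 0 2 ((d10 a + d21 b) + (d01 a + d10 b) + d01 b)"
    by (metis B2E)
  then have "y = d01 b" using components_deg2(1)[OF dd_deg1(2-4)[OF ab(1,2)]] by simp
  then show "y \<in> d01 ` C 0 1" using ab(2) by blast
qed

lemma proj_1_coboundary:
  assumes "x \<in> B2"
  shows "proj s C 1 x \<in> C 1 1 \<longleftrightarrow> comp s C 0 2 x = 0"
    and "comp s C 0 2 x = 0 \<Longrightarrow> proj s C 1 x = comp s C 1 1 x"
proof -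
  obtain a b where ab: "a \<in> C 1 0" "b \<in> C 0 1" "x = (d10 a + d21 b) + (d01 a + d10 b) + d01 b"
    using assms by (rule B2E)
  note pieces = dd_deg1(2-4)[OF ab(1,2)]
  have comps: "comp s C 0 2 x = d01 b" "comp s C 1 1 x = d01 a + d10 b" "proj s C 1 x = d01 a + d10 b + d01 b"
    using components_deg2[OF pieces] ab(3) by simp_all
  have "0 + (d01 a + d10 b + d01 b) + 0 = 0 + (d01 a + d10 b) + d01 b \<longleftrightarrow> d01 b = 0"
    if "d01 a + d10 b + d01 b \<in> C 1 1"
    using deg2_sum_eq_iff[OF C_0 that C_0 C_0 pieces(2,3)] by simp
  then have "d01 a + d10 b + d01 b \<in> C 1 1 \<longleftrightarrow> d01 b = 0" using pieces(2) by (auto simp: add.assoc)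
  then show "proj s C 1 x \<in> C 1 1 \<longleftrightarrow> comp s C 0 2 x = 0" using comps by simp
  show "comp s C 0 2 x = 0 \<Longrightarrow> proj s C 1 x = comp s C 1 1 x" using comps by simp
qed

lemma Bcal_2_1_eq: "Bcal s C d21 d10 d01 2 1 \<inter> C 1 1 = comp s C 1 1 ` {x \<in> B2. comp s C 0 2 x = 0}"
proof -
  have Bcal: "Bcal s C d21 d10 d01 2 1 = proj s C 1 ` B2" by (simp add: Bcal_def)
  show ?thesis
  proof (intro equalityI subsetI)
    fix y assume "y \<in> Bcal s C d21 d10 d01 2 1 \<inter> C 1 1"
    then obtain x where x: "x \<in> B2" "y = proj s C 1 x" "proj s C 1 x \<in> C 1 1" unfolding Bcal by blast
    then have "comp s C 0 2 x = 0" "y = comp s C 1 1 x" using proj_1_coboundary by blast+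
    then show "y \<in> comp s C 1 1 ` {x \<in> B2. comp s C 0 2 x = 0}" using x(1) by blast
  next
    fix y assume "y \<in> comp s C 1 1 ` {x \<in> B2. comp s C 0 2 x = 0}"
    then obtain x where x: "x \<in> B2" "comp s C 0 2 x = 0" "y = comp s C 1 1 x" by blast
    then have "y = proj s C 1 x" "proj s C 1 x \<in> C 1 1" using proj_1_coboundary[OF x(1)] by simp_all
    then show "y \<in> Bcal s C d21 d10 d01 2 1 \<inter> C 1 1" unfolding Bcal using x(1) by auto
  qed
qed

lemma BN_0_3E:
  assumes "t \<in> BN C d21 d10 d01 0 3"
  obtains n where "n \<in> C 2 0" "t = dd n"
  using assms unfolding BN_def Nsp_def by auto

lemma BN_1_3E:
  assumes "t \<in> BN C d21 d10 d01 1 3"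
  obtains n where "n \<in> C 1 1" "t = dd n"
  using assms unfolding BN_def Nsp_def by auto

lemma Zcal_2_2_subset: "Zcal s C d21 d10 d01 2 2 \<subseteq> comp s C 0 2 ` Z2"
proof
  fix y assume "y \<in> Zcal s C d21 d10 d01 2 2"
  then obtain \<eta> where \<eta>: "\<eta> \<in> Msp s C d21 d10 d01 2" "proj s C 2 (dd \<eta>) = 0" "y = proj s C 2 \<eta>"
    unfolding Zcal_def by blast
  then have \<eta>C: "\<eta> \<in> Ck s C 2" and BN: "\<And>i j. i + j = 3 \<Longrightarrow> comp s C i j (dd \<eta>) \<in> BN C d21 d10 d01 j 3"
    unfolding Msp_def by auto
  obtain u v w where uvw: "u \<in> C 2 0" "v \<in> C 1 1" "w \<in> C 0 2" "\<eta> = u + v + w"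
    using \<eta>C by (rule Ck_2E)
  note dd\<eta> = dd_deg2[OF uvw(1-3), folded uvw(4)]
  note comps = components_deg3[OF dd\<eta>(2-5), folded dd\<eta>(1)]
  have "0 + 0 + (d01 v + d10 w) + d01 w = 0" using \<eta>(2) comps(2)[of 2] by simp
  then have top: "d01 v + d10 w = 0" "d01 w = 0" using deg3_sum_eq_0_iff[OF C_0 C_0 dd\<eta>(4,5)] by auto
  (* The M^2 condition makes the (3,0)- and (2,1)-components of dd eta coboundaries dd n0, dd n1
     of elements of N; subtracting n0 and n1 leaves a cocycle with the same (0,2)-component. *)
  obtain n0 where n0: "n0 \<in> C 2 0" "d10 u + d21 v = dd n0"
    using BN[of 3 0] comps(1)[of 3 0] by (auto elim: BN_0_3E)
  obtain n1 where n1: "n1 \<in> C 1 1" "d01 u + d10 v + d21 w = dd n1"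
    using BN[of 2 1] comps(1)[of 2 1] by (auto elim: BN_1_3E)
  define x where "x = (u - n0) + (v - n1) + w"
  have x_pieces: "u - n0 \<in> C 2 0" "v - n1 \<in> C 1 1" using uvw n0 n1 C_diff by auto
  have "x = \<eta> - n0 - n1" unfolding x_def uvw(4) by (simp add: algebra_simps)
  then have "dd x = dd \<eta> - dd n0 - dd n1" by (simp add: dd.diff)
  also have "\<dots> = 0" unfolding dd\<eta>(1) top n0(2)[symmetric] n1(2)[symmetric] by simp
  finally have "x \<in> Z2" unfolding x_def using Ck_2I[OF x_pieces uvw(3)] by blast
  moreover have "comp s C 0 2 x = y"
    unfolding x_def \<eta>(3) uvw(4) components_deg2(1)[OF x_pieces uvw(3)] components_deg2(2)[OF uvw(1-3)]
    by simp
  ultimately show "y \<in> comp s C 0 2 ` Z2" by blast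
qed

lemma comp_0_2_Z2_subset: "comp s C 0 2 ` Z2 \<subseteq> Zcal s C d21 d10 d01 2 2"
proof
  fix y assume "y \<in> comp s C 0 2 ` Z2"
  then obtain x where x: "x \<in> Ck s C 2" "dd x = 0" "y = comp s C 0 2 x" by blast
  have "proj s C 2 x = comp s C 0 2 x"
    using x(1) by (auto elim!: Ck_2E simp: components_deg2)
  moreover have "x \<in> Msp s C d21 d10 d01 2"
    unfolding Msp_def using x(1,2) comp_0 zero_in_BN by simp
  moreover have "proj s C 2 (dd x) = 0" using x(2) proj_0 by simp
  ultimately show "y \<in> Zcal s C d21 d10 d01 2 2"
    unfolding Zcal_def x(3) by (metis (mono_tags, lifting) mem_Collect_eq)
qed

lemma Zcal_2_2_eq: "Zcal s C d21 d10 d01 2 2 = comp s C 0 2 ` Z2"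
  using Zcal_2_2_subset comp_0_2_Z2_subset by (rule subset_antisym)

lemma ker_varrho_2_subset: "ker_varrho s C d21 d10 d01 2 \<subseteq> comp s C 1 1 ` {x \<in> Z2. comp s C 0 2 x = 0}"
proof
  fix y assume y: "y \<in> ker_varrho s C d21 d10 d01 2"
  then have "y \<in> C 1 1" unfolding ker_varrho_def Jcal_def by auto
  from y obtain \<eta> where \<eta>: "\<eta> \<in> Ck s C 2" "proj s C 1 \<eta> = y" "proj s C 1 (dd \<eta>) = 0"
      "d21 (comp s C 1 1 y) + d10 (comp s C 2 0 \<eta>) \<in> BN C d21 d10 d01 0 3"
    unfolding ker_varrho_def by auto
  obtain u v w where uvw: "u \<in> C 2 0" "v \<in> C 1 1" "w \<in> C 0 2" "\<eta> = u + v + w"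
    using \<eta>(1) by (rule Ck_2E)
  note dd\<eta> = dd_deg2[OF uvw(1-3), folded uvw(4)]
  have "0 + y + 0 = 0 + v + w" using \<eta>(2) components_deg2(2)[OF uvw(1-3)] uvw(4) by simp
  then have vy: "v = y" "w = 0" using deg2_sum_eq_iff[OF C_0 \<open>y \<in> C 1 1\<close> C_0 C_0 uvw(2,3)] by auto
  have "0 + (d01 u + d10 v + d21 w) + (d01 v + d10 w) + d01 w = 0"
    using \<eta>(3) components_deg3(2)[OF dd\<eta>(2-5), folded dd\<eta>(1), of 1] by (simp add: add.assoc)
  then have top: "d01 u + d10 v + d21 w = 0" "d01 v + d10 w = 0" "d01 w = 0"
    using deg3_sum_eq_0_iff[OF C_0 dd\<eta>(3-5)] by auto
  have "comp s C 1 1 y = v" "comp s C 2 0 \<eta> = u"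
    using components_deg2(1)[OF C_0 \<open>y \<in> C 1 1\<close> C_0] components_deg2(1)[OF uvw(1-3)] vy uvw(4) by simp_all
  then obtain n0 where n0: "n0 \<in> C 2 0" "d10 u + d21 v = dd n0"
    using \<eta>(4) by (auto simp: add.commute elim: BN_0_3E)
  (* Only the (3,0)-component of dd eta survives, and it is dd n0 for some n0 in N. *)
  define x where "x = (u - n0) + v + w"
  have x_piece: "u - n0 \<in> C 2 0" using uvw(1) n0(1) C_diff by auto
  have "x = \<eta> - n0" unfolding x_def uvw(4) by (simp add: algebra_simps)
  then have "dd x = dd \<eta> - dd n0" by (simp add: dd.diff)
  also have "\<dots> = 0" unfolding dd\<eta>(1) top n0(2)[symmetric] by simp
  finally have "x \<in> Z2" unfolding x_def using Ck_2I[OF x_piece uvw(2,3)] by blast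
  moreover have "comp s C 0 2 x = 0" "comp s C 1 1 x = y"
    unfolding x_def components_deg2(1)[OF x_piece uvw(2,3)] using vy by simp_all
  ultimately show "y \<in> comp s C 1 1 ` {x \<in> Z2. comp s C 0 2 x = 0}" by force
qed

lemma comp_1_1_Z2_subset: "comp s C 1 1 ` {x \<in> Z2. comp s C 0 2 x = 0} \<subseteq> ker_varrho s C d21 d10 d01 2"
proof
  fix y assume "y \<in> comp s C 1 1 ` {x \<in> Z2. comp s C 0 2 x = 0}"
  then obtain x where x: "x \<in> Ck s C 2" "dd x = 0" "comp s C 0 2 x = 0" "y = comp s C 1 1 x" by blast
  obtain u v w where uvw: "u \<in> C 2 0" "v \<in> C 1 1" "w \<in> C 0 2" "x = u + v + w"
    using x(1) by (rule Ck_2E)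
  note ddx = dd_deg2[OF uvw(1-3), folded uvw(4)]
  have vw: "y = v" "w = 0" using x(3,4) components_deg2(1)[OF uvw(1-3)] uvw(4) by simp_all
  have "d10 u + d21 v = 0" using x(2) deg3_sum_eq_0_iff[OF ddx(2-5)] ddx(1) by simp
  moreover have "comp s C 1 1 y = v" "comp s C 2 0 x = u"
    using components_deg2(1)[OF C_0 uvw(2) C_0] components_deg2(1)[OF uvw(1-3)] vw uvw(4) by simp_all
  ultimately have "d21 (comp s C (2 - 1) 1 y) + d10 (comp s C 2 0 x) \<in> BN C d21 d10 d01 0 (2 + 1)"
    using zero_in_BN by (simp add: add.commute)
  moreover have "proj s C 1 x = y" "proj s C 1 (dd x) = 0"
    using components_deg2(2)[OF uvw(1-3)] uvw(4) vw x(2) proj_0 by simp_all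
  moreover have "y \<in> C (2 - 1) 1" using uvw(2) vw by simp
  ultimately show "y \<in> ker_varrho s C d21 d10 d01 2"
    unfolding ker_varrho_def Jcal_def Acal_def using x(1) by blast
qed

lemma ker_varrho_2_eq: "ker_varrho s C d21 d10 d01 2 = comp s C 1 1 ` {x \<in> Z2. comp s C 0 2 x = 0}"
  using ker_varrho_2_subset comp_1_1_Z2_subset by (rule subset_antisym)

end

theorem corollary5p6:
  fixes s :: "'f::field \<Rightarrow> 'v::ab_group_add \<Rightarrow> 'v"
    and C :: "int \<Rightarrow> int \<Rightarrow> 'v set"
    and d21 d10 d01 :: "'v \<Rightarrow> 'v"
  assumes vs: "vector_space s"
    and sub: "\<And>p q. module.subspace s (C p q)"
    and zero: "\<And>p q. p < 0 \<or> q < 0 \<Longrightarrow> C p q = {0}"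
    and dsum: "indep_family C"
    and lin: "Vector_Spaces.linear s s d21" "Vector_Spaces.linear s s d10" "Vector_Spaces.linear s s d01"
    and bideg: "\<And>p q x. x \<in> C p q \<Longrightarrow> d21 x \<in> C (p + 2) (q - 1)"
               "\<And>p q x. x \<in> C p q \<Longrightarrow> d10 x \<in> C (p + 1) q"
               "\<And>p q x. x \<in> C p q \<Longrightarrow> d01 x \<in> C p (q + 1)"
    and sq: "\<And>k x. x \<in> Ck s C k \<Longrightarrow> tot d21 d10 d01 (tot d21 d10 d01 x) = 0"
  shows
    "lin_iso3 s (tot d21 d10 d01 ` Ck s C 1)
        (tot d21 d10 d01 ` Ck s C 1 \<inter> C 2 0)
        (Bcal s C d21 d10 d01 2 1 \<inter> C 1 1)
        (d01 ` C 0 1)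
   \<and> lin_iso3 s {x \<in> Ck s C 2. tot d21 d10 d01 x = 0}
        (ZN C d21 d10 d01 0 2)
        (ker_varrho s C d21 d10 d01 2)
        (Zcal s C d21 d10 d01 2 2)
   \<and> quot_iso3 s {x \<in> Ck s C 2. tot d21 d10 d01 x = 0} (tot d21 d10 d01 ` Ck s C 1)
        (ZN C d21 d10 d01 0 2) (tot d21 d10 d01 ` Ck s C 1 \<inter> C 2 0)
        (ker_varrho s C d21 d10 d01 2) (Bcal s C d21 d10 d01 2 1 \<inter> C 1 1)
        (Zcal s C d21 d10 d01 2 2) (d01 ` C 0 1)"
proof -
  interpret bigraded_complex s C d21 d10 d01
    by (intro bigraded_complex.intro bigraded_complex_axioms.intro vs sub zero dsum lin bideg sq)
  have Z2_Ck: "Z2 \<subseteq> Ck s C 2" and B2_Ck: "B2 \<subseteq> Ck s C 2" using B2_subset_Z2 by blast+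
  have comp_Z2: "linear_on Z2 (comp s C p q)" and comp_B2: "linear_on B2 (comp s C p q)" for p q
    by (rule linear_on_subset[OF linear_on_comp_deg2], fact)+
  have A_Z2: "{x \<in> Z2. comp s C 0 2 x = 0 \<and> comp s C 1 1 x = 0} = ZN C d21 d10 d01 0 2"
    by (simp only: ZN_0_2_eq Int_C_2_0_eq[OF Z2_Ck])
  have A_B2: "{x \<in> B2. comp s C 0 2 x = 0 \<and> comp s C 1 1 x = 0} = B2 \<inter> C 2 0"
    by (rule Int_C_2_0_eq[OF B2_Ck, symmetric])
  show ?thesis
    using lin_iso3_two_step_filtration[OF subspace_B2 comp_B2[of 0 2] comp_B2[of 1 1]]
      lin_iso3_two_step_filtration[OF subspace_Z2 comp_Z2[of 0 2] comp_Z2[of 1 1]]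
      quot_iso3_two_step_filtration[OF subspace_Z2 subspace_B2 B2_subset_Z2 comp_Z2[of 0 2] comp_Z2[of 1 1]]
    unfolding A_Z2 A_B2 Zcal_2_2_eq ker_varrho_2_eq Bcal_2_1_eq d01_image_eq by blast
qed

end
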